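(* For all integers $n\geq 0$ and $p\geq 0$, \[ \sum_{j=0}^n \binom{p+j}{j}\binom{2(n-j)}{n-j}4^{j}O_{n-j} = 2^{2n-1}\binom{n+p+1}{n}\bigl(H_{n+p+1}-H_{p+1}\bigr) - \sum_{j=1}^n \binom{p+j}{j-1}4^{j-1}C_{n-j}\bigl(H_{p+j}-H_{p+1}\bigr). \] In particular, \[ \sum_{j=0}^n \binom{2j}{j}\frac{O_j}{4^j} = \frac{n+1}{2}\bigl(H_{n+1}-1\bigr) - \sum_{j=1}^n \frac{j\,C_{n-j}}{4^{n+1-j}}\bigl(H_j-1\bigr). \]
   Context: $H_n=\sum_{j=1}^n \frac1j$ is the $n$th harmonic number ($H_0=0$), $O_n=\sum_{j=1}^n\frac{1}{2j-1}$ is the $n$th odd harmonic number ($O_0=0$), and $C_n=\frac{1}{n+1}\binom{2n}{n}$ is the $n$th Catalan number. *)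

theory Defs
  imports "HOL-Analysis.Analysis"
begin

definition oddharm :: "nat \<Rightarrow> real" where
  "oddharm n = (\<Sum>j=1..n. 1 / (2 * real j - 1))"

definition catalan :: "nat \<Rightarrow> real" where
  "catalan n = real ((2*n) choose n) / (real n + 1)"

end

theory Submission
  imports Defs
begin

text \<open>
  Put \<open>q = p + 1\<close>. Both sides of the first identity are convolutions
  \<open>F(n, q) = sum_{j<=n} P(j, q) 4^j c(n - j)\<close>: the left one with kernel \<open>binom(q+j-1, j)\<close> and
  \<open>c(k) = binom(2k, k) O_k\<close>, the right one with kernel \<open>binom(j+q, j) (H_{j+q} - H_q)\<close> and
  \<open>c(0) = 1/2\<close>, \<open>c(k+1) = -C_k\<close>. Both kernels obey Pascal's rule
  \<open>P(j+1, q+1) = P(j+1, q) + P(j, q+1)\<close>, hence both sides obey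
  \<open>F(n+1, q+1) = F(n+1, q) + 4 F(n, q+1)\<close>, and it suffices to compare them at \<open>n = 0\<close> and \<open>q = 0\<close>.
  At \<open>q = 0\<close> the claim is \<open>binom(2n, n) O_n = 4^n H_n / 2 - sum_{j<n} 4^j C_{n-1-j} H_j\<close>; after
  swapping the sum with the one defining \<open>H_j\<close>, it follows from the partial sums
  \<open>sum_{k<d} 4^{d-1-k} C_k = (4^d - binom(2d, d)) / 2\<close> and from
  \<open>2 binom(2n, n) O_n = sum_{i=1}^n 4^i binom(2(n-i), n-i) / i\<close>, both sides of which satisfy the same
  first-order recurrence. The second identity is the case \<open>p = 0\<close>, reversed and divided by \<open>4^n\<close>.
\<close>

definition central_binom :: "nat \<Rightarrow> real" where
  "central_binom k = real ((2*k) choose k)"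

lemma central_binom_0 [simp]: "central_binom 0 = 1"
  by (simp add: central_binom_def)

lemma Suc_times_central_binom_Suc:
  "(real k + 1) * central_binom (Suc k) = 2 * (2 * real k + 1) * central_binom k"
proof -
  have "Suc k * ((2 * Suc k) choose Suc k) = 2 * (2*k + 1) * ((2*k) choose k)"
    by (metis (no_types, lifting) ext Suc_eq_plus1 Suc_times_binomial_add
        add_2_eq_Suc add_mult_distrib binomial_absorption diff_add_inverse
        mult_Suc_right mult_numeral_1)
  then have "real (Suc k * ((2 * Suc k) choose Suc k)) = real (2 * (2*k + 1) * ((2*k) choose k))"
    by (rule arg_cong)
  then show ?thesis
    unfolding central_binom_def by (simp add: algebra_simps)
qed

lemma catalan_conv_central_binom: "catalan k = central_binom k / (real k + 1)"
  by (simp add: catalan_def central_binom_def)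

lemma central_binom_Suc_conv_catalan:
  "central_binom (Suc k) = 4 * central_binom k - 2 * catalan k"
  using Suc_times_central_binom_Suc[of k]
  by (simp add: catalan_conv_central_binom field_simps)

lemma sum_pow4_catalan:
  assumes "i \<le> n"
  shows "(\<Sum>j=i..<n. 4^j * catalan (n - Suc j)) = (4^n - 4^i * central_binom (n - i)) / 2"
  using assms
proof (induction i rule: inc_induct)
  case base
  then show ?case by simp
next
  case (step i)
  then have n_minus: "n - i = Suc (n - Suc i)"
    by simp
  have "(\<Sum>j=i..<n. 4^j * catalan (n - Suc j))
        = 4^i * catalan (n - Suc i) + (\<Sum>j=Suc i..<n. 4^j * catalan (n - Suc j))"
    using step.hyps by (simp add: sum.atLeast_Suc_lessThan)
  also have "\<dots> = (4^n - 4^i * central_binom (n - i)) / 2"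
    unfolding step.IH n_minus central_binom_Suc_conv_catalan by (simp add: field_simps)
  finally show ?case .
qed

text \<open>The coefficient of \<open>x^n\<close> in \<open>-ln(1-4x) / sqrt(1-4x)\<close>.\<close>
definition log_central_binom_coeff :: "nat \<Rightarrow> real" where
  "log_central_binom_coeff n = (\<Sum>i=1..n. 4^i * central_binom (n - i) / real i)"

lemma sum_pow4_central_binom_Suc:
  "(\<Sum>i=1..Suc n. 4^i * central_binom (Suc n - i))
     = 4 * central_binom n + 4 * (\<Sum>i=1..n. 4^i * central_binom (n - i))"
proof -
  have "(\<Sum>i=1..Suc n. 4^i * central_binom (Suc n - i)) = (\<Sum>i\<le>n. 4^Suc i * central_binom (n - i))"
    unfolding One_nat_def sum.atLeast1_atMost_eq lessThan_Suc_atMost by simp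
  also have "\<dots> = 4 * central_binom n + 4 * (\<Sum>i=1..n. 4^i * central_binom (n - i))"
    by (simp add: sum.atMost_shift sum.atLeast1_atMost_eq sum_distrib_left mult.assoc)
  finally show ?thesis .
qed

lemma log_central_binom_coeff_Suc:
  "(real n + 1) * log_central_binom_coeff (Suc n)
     = (4 * real n + 2) * log_central_binom_coeff n + 4 * central_binom n"
proof -
  let ?B = "\<lambda>i. 4^i * central_binom (n - i)"
  have split_term: "(real n + 1) * (4^i * central_binom (Suc n - i) / real i)
      = 4^i * central_binom (Suc n - i) + (4 * real n + 2) * (?B i / real i) - 4 * ?B i"
    if "i \<in> {1..n}" for i
  proof -
    from that have "Suc n - i = Suc (n - i)" by auto
    with Suc_times_central_binom_Suc[of "n - i"] that
    have "real (Suc n - i) * central_binom (Suc n - i) = (4 * real n + 2 - 4 * real i) * central_binom (n - i)"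
      by (simp add: of_nat_diff algebra_simps)
    with that have "(real n + 1) * central_binom (Suc n - i)
        = real i * central_binom (Suc n - i) + (4 * real n + 2 - 4 * real i) * central_binom (n - i)"
      by (simp add: of_nat_diff algebra_simps)
    then have "(real n + 1) * (4^i * central_binom (Suc n - i) / real i)
        = 4^i / real i * (real i * central_binom (Suc n - i) + (4 * real n + 2 - 4 * real i) * central_binom (n - i))"
      by simp
    with that show ?thesis
      by (simp add: field_simps)
  qed
  have "(real n + 1) * log_central_binom_coeff (Suc n)
        = (\<Sum>i=1..n. (real n + 1) * (4^i * central_binom (Suc n - i) / real i)) + 4^Suc n"
    unfolding log_central_binom_coeff_def by (simp add: sum_distrib_left distrib_left add_ac)
  also have "\<dots> = (\<Sum>i=1..n. 4^i * central_binom (Suc n - i) + (4 * real n + 2) * (?B i / real i) - 4 * ?B i)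
                  + 4^Suc n"
    by (simp only: sum.cong[OF refl split_term])
  also have "\<dots> = (\<Sum>i=1..Suc n. 4^i * central_binom (Suc n - i))
                  + (4 * real n + 2) * log_central_binom_coeff n - 4 * (\<Sum>i=1..n. ?B i)"
    unfolding log_central_binom_coeff_def
    by (simp add: sum.distrib sum_subtractf sum_distrib_left)
  also have "\<dots> = (4 * real n + 2) * log_central_binom_coeff n + 4 * central_binom n"
    unfolding sum_pow4_central_binom_Suc by simp
  finally show ?thesis .
qed

lemma log_central_binom_coeff_eq: "log_central_binom_coeff n = 2 * central_binom n * oddharm n"
proof (induction n)
  case 0
  then show ?case by (simp add: log_central_binom_coeff_def oddharm_def)
next
  case (Suc n)
  have "oddharm (Suc n) = oddharm n + 1 / (2 * real n + 1)"
    by (simp add: oddharm_def)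
  have "(real n + 1) * (2 * central_binom (Suc n) * oddharm (Suc n))
        = 2 * ((real n + 1) * central_binom (Suc n)) * oddharm (Suc n)"
    by (simp add: ac_simps)
  also have "\<dots> = 4 * (2 * real n + 1) * central_binom n * (oddharm n + 1 / (2 * real n + 1))"
    unfolding Suc_times_central_binom_Suc \<open>oddharm (Suc n) = _\<close> by simp
  also have "\<dots> = (real n + 1) * log_central_binom_coeff (Suc n)"
    unfolding log_central_binom_coeff_Suc Suc.IH by (simp add: field_simps)
  finally show ?case
    by simp
qed

lemma sum_mult_harm:
  fixes f :: "nat \<Rightarrow> real"
  shows "(\<Sum>j<n. f j * harm j) = (\<Sum>i=1..n. (\<Sum>j=i..<n. f j) / real i)"
proof (induction n)
  case 0
  then show ?case by simp
next
  case (Suc n)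
  have "(\<Sum>i=1..Suc n. (\<Sum>j=i..<Suc n. f j) / real i) = (\<Sum>i=1..n. (\<Sum>j=i..<n. f j) / real i + f n / real i)"
    by (simp add: sum.atLeastLessThan_Suc add_divide_distrib)
  also have "\<dots> = (\<Sum>j<Suc n. f j * harm j)"
    using Suc.IH by (simp add: sum.distrib harm_def sum_distrib_left divide_inverse)
  finally show ?case ..
qed

lemma central_binom_oddharm_eq:
  "central_binom n * oddharm n = 4^n / 2 * harm n - (\<Sum>j<n. 4^j * catalan (n - Suc j) * harm j)"
proof -
  have "(\<Sum>j<n. 4^j * catalan (n - Suc j) * harm j)
        = (\<Sum>i=1..n. (4^n - 4^i * central_binom (n - i)) / 2 / real i)"
    unfolding sum_mult_harm
  proof (intro sum.cong refl)
    fix i assume "i \<in> {1..n}"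
    then show "(\<Sum>j=i..<n. 4^j * catalan (n - Suc j)) / real i
               = (4^n - 4^i * central_binom (n - i)) / 2 / real i"
      by (subst sum_pow4_catalan) auto
  qed
  also have "\<dots> = (\<Sum>i=1..n. 4^n / 2 * inverse (real i) - 4^i * central_binom (n - i) / real i / 2)"
    by (intro sum.cong refl) (simp add: field_simps)
  also have "\<dots> = 4^n / 2 * harm n - log_central_binom_coeff n / 2"
    unfolding harm_def log_central_binom_coeff_def
    by (simp only: sum_subtractf sum_distrib_left sum_divide_distrib)
  finally show ?thesis
    by (simp add: log_central_binom_coeff_eq)
qed

definition binom_harm_diff :: "nat \<Rightarrow> nat \<Rightarrow> real" where
  "binom_harm_diff m q = real ((m + q) choose m) * (harm (m + q) - harm q)"

lemma binom_harm_diff_0_left [simp]: "binom_harm_diff 0 q = 0"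
  by (simp add: binom_harm_diff_def)

lemma binom_harm_diff_0_right [simp]: "binom_harm_diff m 0 = harm m"
  by (simp add: binom_harm_diff_def harm_expand)

lemma binom_harm_diff_Suc_Suc:
  "binom_harm_diff (Suc m) (Suc q) = binom_harm_diff (Suc m) q + binom_harm_diff m (Suc q)"
proof -
  define Z where "Z = real ((m + q + 2) choose Suc m)"
  define X where "X = real ((m + q + 1) choose Suc m)"
  define Y where "Y = real ((m + q + 1) choose m)"
  have pascal: "Z = X + Y"
    unfolding X_def Y_def Z_def using binomial_Suc_Suc[of "m + q + 1" m] by simp
  have "(q + 1) * ((m + q + 2) choose Suc m) = (m + q + 2) * ((m + q + 1) choose Suc m)"
    using binomial_absorb_comp[of "m + q + 2" "Suc m"] by simp
  then have absorb: "Z / (real m + real q + 2) = X / (real q + 1)"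
    unfolding X_def Z_def by (simp add: field_simps flip: of_nat_mult)
  have "harm (m + q + 2) = harm (m + q + 1) + 1 / (real m + real q + 2)"
    and "harm (Suc q) = harm q + 1 / (real q + 1)"
    by (simp_all add: harm_Suc numeral_2_eq_2 divide_inverse add_ac)
  \<comment> \<open>the two new harmonic terms \<open>Z / (m + q + 2)\<close> and \<open>X / (q + 1)\<close> cancel by \<open>absorb\<close>\<close>
  then have "Z * (harm (m + q + 2) - harm (Suc q))
      = X * (harm (m + q + 1) - harm q) + Y * (harm (m + q + 1) - harm (Suc q))"
    using pascal absorb by (simp add: algebra_simps add_divide_distrib)
  then show ?thesis
    unfolding binom_harm_diff_def X_def Y_def Z_def by (simp add: add_ac numeral_2_eq_2)
qed

text \<open>The coefficient of \<open>x^j\<close> in \<open>(1 - x)^-q\<close>; thanks to truncated subtraction it is also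
  right for \<open>q = 0\<close>, where it vanishes unless \<open>j = 0\<close>.\<close>
definition multichoose :: "nat \<Rightarrow> nat \<Rightarrow> nat" where
  "multichoose q j = (q + j - 1) choose j"

lemma multichoose_0_left: "multichoose 0 j = (if j = 0 then 1 else 0)"
  by (simp add: multichoose_def)

lemma multichoose_0_right [simp]: "multichoose q 0 = 1"
  by (simp add: multichoose_def)

lemma multichoose_Suc_Suc:
  "multichoose (Suc q) (Suc j) = multichoose q (Suc j) + multichoose (Suc q) j"
  by (simp add: multichoose_def)

definition weighted_conv ::
    "(nat \<Rightarrow> nat \<Rightarrow> 'a) \<Rightarrow> 'a \<Rightarrow> (nat \<Rightarrow> 'a) \<Rightarrow> nat \<Rightarrow> nat \<Rightarrow> 'a :: comm_semiring_1" where
  "weighted_conv P x a n q = (\<Sum>j\<le>n. P j q * x^j * a (n - j))"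

lemma weighted_conv_0 [simp]: "weighted_conv P x a 0 q = P 0 q * a 0"
  by (simp add: weighted_conv_def)

lemma weighted_conv_multichoose_0:
  "weighted_conv (\<lambda>j q. of_nat (multichoose q j)) x a n 0 = a n"
  by (simp add: weighted_conv_def multichoose_0_left sum.atMost_shift)

lemma weighted_conv_Suc_Suc:
  assumes "\<And>j. P (Suc j) (Suc r) = P (Suc j) r + P j (Suc r)" and "P 0 (Suc r) = P 0 r"
  shows "weighted_conv P x a (Suc n) (Suc r)
           = weighted_conv P x a (Suc n) r + x * weighted_conv P x a n (Suc r)"
proof -
  have "weighted_conv P x a (Suc n) (Suc r)
        = P 0 (Suc r) * a (Suc n) + (\<Sum>j\<le>n. P (Suc j) (Suc r) * x^Suc j * a (n - j))"
    unfolding weighted_conv_def sum.atMost_Suc_shift by simp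
  also have "\<dots> = (P 0 r * a (Suc n) + (\<Sum>j\<le>n. P (Suc j) r * x^Suc j * a (n - j)))
                  + x * (\<Sum>j\<le>n. P j (Suc r) * x^j * a (n - j))"
    using assms by (simp add: algebra_simps sum.distrib sum_distrib_left)
  also have "\<dots> = weighted_conv P x a (Suc n) r + x * weighted_conv P x a n (Suc r)"
    unfolding weighted_conv_def sum.atMost_Suc_shift by simp
  finally show ?thesis .
qed

lemma weighted_conv_case_nat:
  "weighted_conv P x (case_nat c b) n q = P n q * x^n * c + (\<Sum>j<n. P j q * x^j * b (n - Suc j))"
proof -
  have "(\<Sum>j<n. P j q * x^j * case_nat c b (n - j)) = (\<Sum>j<n. P j q * x^j * b (n - Suc j))"
  proof (intro sum.cong refl)
    fix j assume "j \<in> {..<n}"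
    then have "n - j = Suc (n - Suc j)" by simp
    then show "P j q * x^j * case_nat c b (n - j) = P j q * x^j * b (n - Suc j)" by simp
  qed
  then show ?thesis
    unfolding weighted_conv_def lessThan_Suc_atMost[symmetric] by (simp add: add.commute)
qed

lemma grid_recurrence_unique:
  assumes F_rec: "\<And>n r. F (Suc n) (Suc r) = h (F (Suc n) r) (F n (Suc r))"
    and G_rec: "\<And>n r. G (Suc n) (Suc r) = h (G (Suc n) r) (G n (Suc r))"
    and "\<And>q. F 0 q = G 0 q" and "\<And>n. F n 0 = G n 0"
  shows "F n q = G n q"
proof (induction q arbitrary: n)
  case 0
  show ?case by fact
next
  case (Suc r)
  note outer_IH = Suc.IH
  show ?case
  proof (induction n)
    case 0
    show ?case by fact
  next
    case (Suc m)
    then show ?case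
      unfolding F_rec G_rec using outer_IH by simp
  qed
qed

lemma weighted_conv_central_binom_oddharm:
  "weighted_conv (\<lambda>j q. real (multichoose q j)) 4 (\<lambda>k. central_binom k * oddharm k) n q
     = weighted_conv binom_harm_diff 4 (case_nat (1/2) (\<lambda>k. - catalan k)) n q"
proof (rule grid_recurrence_unique[where h = "\<lambda>u v. u + 4 * v"])
  show "weighted_conv (\<lambda>j q. real (multichoose q j)) 4 (\<lambda>k. central_binom k * oddharm k) n 0
        = weighted_conv binom_harm_diff 4 (case_nat (1/2) (\<lambda>k. - catalan k)) n 0" for n
    unfolding weighted_conv_multichoose_0 weighted_conv_case_nat central_binom_oddharm_eq
    by (simp add: sum_negf algebra_simps)
qed (auto simp: weighted_conv_Suc_Suc multichoose_Suc_Suc binom_harm_diff_Suc_Suc oddharm_def)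

lemma two_powi_double_minus_one: "(2::real) powi (2 * int n - 1) = 4^n / 2"
proof -
  have "(2::real) powi (2 * int n) = 2^(2 * n)"
    by (metis of_nat_mult of_nat_numeral power_int_of_nat)
  then show ?thesis
    by (simp add: power_int_diff power_mult)
qed

lemma sum_binomial_central_binom_oddharm:
  "(\<Sum>j=0..n. real ((p+j) choose j) * real ((2*(n-j)) choose (n-j)) * 4^j * oddharm (n-j))
     = (2::real) powi (2 * int n - 1) * real ((n+p+1) choose n) * (harm (n+p+1) - harm (p+1))
       - (\<Sum>j=1..n. real ((p+j) choose (j-1)) * 4^(j-1) * catalan (n-j) * (harm (p+j) - harm (p+1)))"
proof -
  have "(\<Sum>j=0..n. real ((p+j) choose j) * real ((2*(n-j)) choose (n-j)) * 4^j * oddharm (n-j))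
        = weighted_conv (\<lambda>j q. real (multichoose q j)) 4 (\<lambda>k. central_binom k * oddharm k) n (Suc p)"
    unfolding weighted_conv_def multichoose_def central_binom_def by (simp add: atLeast0AtMost mult_ac)
  also have "\<dots> = weighted_conv binom_harm_diff 4 (case_nat (1/2) (\<lambda>k. - catalan k)) n (Suc p)"
    by (rule weighted_conv_central_binom_oddharm)
  also have "\<dots> = (2::real) powi (2 * int n - 1) * real ((n+p+1) choose n) * (harm (n+p+1) - harm (p+1))
       - (\<Sum>j=1..n. real ((p+j) choose (j-1)) * 4^(j-1) * catalan (n-j) * (harm (p+j) - harm (p+1)))"
    unfolding weighted_conv_case_nat binom_harm_diff_def two_powi_double_minus_one
      One_nat_def sum.atLeast1_atMost_eq
    by (simp add: sum_negf sum_subtractf algebra_simps diff_divide_distrib)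
  finally show ?thesis .
qed

lemma sum_central_binom_oddharm_div_pow4:
  "(\<Sum>j=0..n. real ((2*j) choose j) * oddharm j / 4^j)
     = (real n + 1) / 2 * (harm (n+1) - 1) - (\<Sum>j=1..n. real j * catalan (n-j) / 4^(n+1-j) * (harm j - 1))"
  (is "?L = (real n + 1) / 2 * (harm (n+1) - 1) - ?S")
proof -
  have "(\<Sum>j=1..n. real (j choose (j-1)) * 4^(j-1) * catalan (n-j) * (harm j - harm 1))
        = (\<Sum>j=1..n. real j * 4^(j-1) * catalan (n-j) * (harm j - 1))"
  proof (intro sum.cong refl)
    fix j assume "j \<in> {1..n}"
    then have "j choose (j - 1) = j"
      using binomial_symmetric[of "j - 1" j] by simp
    then show "real (j choose (j-1)) * 4^(j-1) * catalan (n-j) * (harm j - harm 1)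
               = real j * 4^(j-1) * catalan (n-j) * (harm j - 1)"
      by (simp add: harm_expand)
  qed
  moreover have "(\<Sum>j=0..n. real ((2*(n-j)) choose (n-j)) * 4^j * oddharm (n-j))
        = 4^n / 2 * real ((n+1) choose n) * (harm (n+1) - harm 1)
          - (\<Sum>j=1..n. real (j choose (j-1)) * 4^(j-1) * catalan (n-j) * (harm j - harm 1))"
    using sum_binomial_central_binom_oddharm[where p = 0]
    by (simp only: add_0 add_0_right binomial_n_n of_nat_1 mult_1_left two_powi_double_minus_one)
  ultimately have special: "(\<Sum>j=0..n. real ((2*(n-j)) choose (n-j)) * 4^j * oddharm (n-j))
        = 4^n / 2 * (real n + 1) * (harm (n+1) - 1) - (\<Sum>j=1..n. real j * 4^(j-1) * catalan (n-j) * (harm j - 1))"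
    by (simp add: harm_expand)
  have "(\<Sum>j=0..n. real ((2*(n-j)) choose (n-j)) * 4^j * oddharm (n-j)) = 4^n * ?L"
    unfolding sum_distrib_left
    by (subst (2) sum.atLeastAtMost_rev) (auto intro!: sum.cong simp: field_simps simp flip: power_add)
  moreover have "(\<Sum>j=1..n. real j * 4^(j-1) * catalan (n-j) * (harm j - 1)) = 4^n * ?S"
    unfolding sum_distrib_left
    by (auto intro!: sum.cong simp: field_simps simp flip: power_add)
  ultimately have "4^n * ?L = 4^n * ((real n + 1) / 2 * (harm (n+1) - 1) - ?S)"
    using special by (simp add: algebra_simps)
  then show ?thesis
    by simp
qed

theorem theorem6:
  fixes n p :: nat
  shows "((\<Sum>j=0..n. real ((p+j) choose j) * real ((2*(n-j)) choose (n-j)) * 4^j * oddharm (n-j))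
           = (2::real) powi (2 * int n - 1) * real ((n+p+1) choose n) * (harm (n+p+1) - harm (p+1))
             - (\<Sum>j=1..n. real ((p+j) choose (j-1)) * 4^(j-1) * catalan (n-j) * (harm (p+j) - harm (p+1)))) \<and>
         ((\<Sum>j=0..n. real ((2*j) choose j) * oddharm j / 4^j)
           = (real n + 1) / 2 * (harm (n+1) - 1)
             - (\<Sum>j=1..n. real j * catalan (n-j) / 4^(n+1-j) * (harm j - 1)))"
  by (intro conjI sum_binomial_central_binom_oddharm sum_central_binom_oddharm_div_pow4)

end
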